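(* Let $R$ be a dp-minimal integral domain with maximal ideal $\mathfrak M$ and fraction field $K$. (1) If $\mathcal O$ is a local overring of $R$ that is non-dominant (i.e. $\mathfrak M\not\subseteq\mathfrak m$, where $\mathfrak m$ is the maximal ideal of $\mathcal O$), then $\mathcal O$ is a valuation ring and $\mathcal O=R_{\mathfrak p}$ for some prime ideal $\mathfrak p\neq\mathfrak M$ of $R$. (2) Let $\mathcal O\supseteq R$ be a valuation overring with maximal ideal $\mathfrak m$ which dominates $R$ (i.e. $\mathfrak M\subseteq\mathfrak m$), and assume the structure $(K;R,\mathcal O)$ (the field $K$ with unary predicates for $R$ and $\mathcal O$) is dp-minimal. Then $\mathcal O\subseteq R_{\mathfrak p}$ for every prime ideal $\mathfrak p\neq\mathfrak M$ of $R$. Furthermore every prime ideal $\mathfrak p\neq \mathfrak M$ of $R$ is a prime ideal of $\mathcal O$, and every prime ideal of $\mathcal O$ strictly contained in $\mathfrak M$ is a prime ideal of $R$; i.e. $\mathrm{Spec}(R)\setminus\{\mathfrak M\}$ is an initial segment of $\mathrm{Spec}(\mathcal O)\setminus\{\mathfrak m\}$.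
   Context: Rings are commutative with identity; dp-minimal means the theory has dp-rank $1$ (a dp-minimal domain is local). An overring of $R$ is a ring $S$ with $R\subseteq S\subseteq\mathrm{Frac}(R)$. Prime spectra of $R$ and $\mathcal O$ are linearly ordered by inclusion. *)

theory Defs
  imports Main
begin

definition subring :: "'a::field set \<Rightarrow> bool" where
  "subring S \<longleftrightarrow> 0 \<in> S \<and> 1 \<in> S \<and> (\<forall>x\<in>S. \<forall>y\<in>S. x + y \<in> S \<and> x - y \<in> S \<and> x * y \<in> S)"

definition ideal_of :: "'a::field set \<Rightarrow> 'a set \<Rightarrow> bool" where
  "ideal_of S I \<longleftrightarrow> I \<subseteq> S \<and> 0 \<in> I \<and> (\<forall>x\<in>I. \<forall>y\<in>I. x + y \<in> I)
     \<and> (\<forall>s\<in>S. \<forall>x\<in>I. s * x \<in> I)"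

definition prime_ideal_of :: "'a::field set \<Rightarrow> 'a set \<Rightarrow> bool" where
  "prime_ideal_of S P \<longleftrightarrow> ideal_of S P \<and> P \<noteq> S \<and>
     (\<forall>a\<in>S. \<forall>b\<in>S. a * b \<in> P \<longrightarrow> a \<in> P \<or> b \<in> P)"

text \<open>Non-units of a subring; for a local ring this is its (unique) maximal ideal.\<close>
definition nonunits :: "'a::field set \<Rightarrow> 'a set" where
  "nonunits S = {x \<in> S. \<not> (\<exists>y\<in>S. x * y = 1)}"

definition is_local :: "'a::field set \<Rightarrow> bool" where
  "is_local S \<longleftrightarrow> ideal_of S (nonunits S)"

definition fraction_field_is :: "'a::field set \<Rightarrow> bool" where
  "fraction_field_is S \<longleftrightarrow> (\<forall>x. \<exists>a\<in>S. \<exists>b\<in>S. b \<noteq> 0 \<and> x = a / b)"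

definition valuation_ring :: "'a::field set \<Rightarrow> bool" where
  "valuation_ring V \<longleftrightarrow> subring V \<and> (\<forall>x. x \<noteq> 0 \<longrightarrow> x \<in> V \<or> inverse x \<in> V)"

definition localization :: "'a::field set \<Rightarrow> 'a set \<Rightarrow> 'a set" where
  "localization S P = {a / s | a s. a \<in> S \<and> s \<in> S \<and> s \<notin> P}"

datatype tm = Var nat | Zero | One | Add tm tm | Minus tm | Mul tm tm

datatype fm = Eq tm tm | Pred nat tm | Not fm | Conj fm fm | Ex nat fm

primrec evt :: "(nat \<Rightarrow> 'a::comm_ring_1) \<Rightarrow> tm \<Rightarrow> 'a" where
  "evt v (Var n) = v n"
| "evt v Zero = 0"
| "evt v One = 1"
| "evt v (Add s t) = evt v s + evt v t"
| "evt v (Minus s) = - evt v s"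
| "evt v (Mul s t) = evt v s * evt v t"

text \<open>Satisfaction in the structure with universe D (closed under the ring
  operations), unary predicates P k, under the valuation v.\<close>
primrec sat :: "'a::comm_ring_1 set \<Rightarrow> (nat \<Rightarrow> 'a set) \<Rightarrow> (nat \<Rightarrow> 'a) \<Rightarrow> fm \<Rightarrow> bool" where
  "sat D P v (Eq s t) = (evt v s = evt v t)"
| "sat D P v (Pred k t) = (evt v t \<in> P k)"
| "sat D P v (Not f) = (\<not> sat D P v f)"
| "sat D P v (Conj f g) = (sat D P v f \<and> sat D P v g)"
| "sat D P v (Ex n f) = (\<exists>c\<in>D. sat D P (v(n := c)) f)"

text \<open>dp-minimality (dp-rank 1): there is no ict-pattern of depth 2 in one variable.
  Variable 0 is the object variable x, all other variables are parameters.
  By compactness, an ict-pattern exists in a monster model of the complete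
  theory iff for every n there are finite patterns of size n in the structure itself.\<close>
definition dp_minimal :: "'a::comm_ring_1 set \<Rightarrow> (nat \<Rightarrow> 'a set) \<Rightarrow> bool" where
  "dp_minimal D P \<longleftrightarrow> \<not> (\<exists>\<phi> \<psi>. \<forall>n::nat. \<exists>a b :: nat \<Rightarrow> nat \<Rightarrow> 'a.
      (\<forall>i<n. \<forall>k. a i k \<in> D) \<and> (\<forall>j<n. \<forall>k. b j k \<in> D) \<and>
      (\<forall>i<n. \<forall>j<n. \<exists>c\<in>D.
          (\<forall>i'<n. sat D P ((a i')(0 := c)) \<phi> \<longleftrightarrow> i' = i) \<and>
          (\<forall>j'<n. sat D P ((b j')(0 := c)) \<psi> \<longleftrightarrow> j' = j)))"

end

theory Submission
  imports Defs
begin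

text \<open>
  If t lies in the maximal ideal of a local ring R, then 1 - t^d is a unit for d > 0, so a
  sequence f t^k avoiding an R-submodule S has pairwise incongruent translates modulo S.
  Turned into ict-patterns of depth 2, this gives two consequences of dp-minimality:
  (a) in R, for any x, y and t as above, y t^k \<in> xR or x t^k \<in> yR for some k;
  (b) in (K; R, O), there is an n such that every y \<noteq> 0 has y t^k \<in> R or t^k/y \<in> O for
  some k < n.

  (1) If a \<in> M is a unit of O, (a) applied to numerator and denominator writes every element
  of K as w/a^k or a^k/w with w \<in> R. Hence z or 1/z lies in O, and O = R_p for the
  contraction p of the maximal ideal of O.

  (2) For a prime p \<noteq> M pick t \<in> M - p; it is a nonunit of O. An element v \<in> O - R_p would
  make y = v t^n violate (b), so O \<subseteq> R_p. Similarly x/s \<notin> R with x \<in> p, s \<notin> p would make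
  y = (x/s)/t^n violate (b); hence pR_p = p, which makes p a prime ideal of every ring between
  R and R_p. The last claim is contraction of prime ideals along R \<subseteq> O.
\<close>

lemma subring_zero: "subring S \<Longrightarrow> 0 \<in> S"
  and subring_one: "subring S \<Longrightarrow> 1 \<in> S"
  and subring_add: "subring S \<Longrightarrow> x \<in> S \<Longrightarrow> y \<in> S \<Longrightarrow> x + y \<in> S"
  and subring_diff: "subring S \<Longrightarrow> x \<in> S \<Longrightarrow> y \<in> S \<Longrightarrow> x - y \<in> S"
  and subring_mult: "subring S \<Longrightarrow> x \<in> S \<Longrightarrow> y \<in> S \<Longrightarrow> x * y \<in> S"
  unfolding subring_def by auto

lemma subring_power: "subring S \<Longrightarrow> x \<in> S \<Longrightarrow> x ^ k \<in> S"
  by (induction k) (simp_all add: subring_one subring_mult)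

lemma mult_eq_one_iff_inverse: "x * y = 1 \<longleftrightarrow> x \<noteq> 0 \<and> y = inverse x" for x y :: "'a::field"
  by (metis inverse_unique mult_zero_left right_inverse zero_neq_one)

lemma mem_nonunits_iff: "x \<in> nonunits S \<longleftrightarrow> x \<in> S \<and> (x = 0 \<or> inverse x \<notin> S)"
  unfolding nonunits_def mult_eq_one_iff_inverse by auto

lemma nonunits_subset: "nonunits S \<subseteq> S"
  unfolding nonunits_def by blast

lemma ideal_ofD:
  assumes "ideal_of S I"
  shows "I \<subseteq> S" "0 \<in> I" "x \<in> I \<Longrightarrow> y \<in> I \<Longrightarrow> x + y \<in> I"
    and "s \<in> S \<Longrightarrow> x \<in> I \<Longrightarrow> s * x \<in> I"
  using assms unfolding ideal_of_def by auto

lemma prime_ideal_ofD: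
  assumes "prime_ideal_of S P"
  shows "ideal_of S P" "P \<noteq> S"
    and "a \<in> S \<Longrightarrow> b \<in> S \<Longrightarrow> a * b \<in> P \<Longrightarrow> a \<in> P \<or> b \<in> P"
  using assms unfolding prime_ideal_of_def by auto

lemma prime_ideal_zero_mem: "prime_ideal_of R P \<Longrightarrow> 0 \<in> P"
  using ideal_ofD(2) prime_ideal_ofD(1) by blast

lemma prime_ideal_one_notin:
  assumes "prime_ideal_of S P"
  shows "1 \<notin> P"
proof
  assume "1 \<in> P"
  then have "S \<subseteq> P" using ideal_ofD(4)[OF prime_ideal_ofD(1)[OF assms(1)], of _ 1] by auto
  then show False using ideal_ofD(1) prime_ideal_ofD(1,2) assms(1) by blast
qed

lemma prime_ideal_mult_notin:
  "prime_ideal_of S P \<Longrightarrow> a \<in> S \<Longrightarrow> b \<in> S \<Longrightarrow> a \<notin> P \<Longrightarrow> b \<notin> P \<Longrightarrow> a * b \<notin> P"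
  using prime_ideal_ofD(3) by blast

lemma prime_ideal_power_notin:
  assumes "prime_ideal_of S P" "subring S" "t \<in> S" "t \<notin> P"
  shows "t ^ k \<notin> P"
proof (induction k)
  case 0
  then show ?case using prime_ideal_one_notin[OF assms(1)] by simp
next
  case (Suc k)
  then show ?case
    using prime_ideal_mult_notin[OF assms(1,3) subring_power[OF assms(2,3)] assms(4)] by simp
qed

lemma prime_ideal_subset_nonunits:
  assumes "prime_ideal_of S P" "subring S"
  shows "P \<subseteq> nonunits S"
proof
  fix x assume x: "x \<in> P"
  have "x \<in> S" using x ideal_ofD(1) prime_ideal_ofD(1)[OF assms(1)] by blast
  moreover have "x = 0 \<or> inverse x \<notin> S"
    using x ideal_ofD(4)[OF prime_ideal_ofD(1)[OF assms(1)], of "inverse x" x]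
      prime_ideal_one_notin[OF assms(1)] by auto
  ultimately show "x \<in> nonunits S" by (simp add: mem_nonunits_iff)
qed

lemma prime_ideal_nonunits:
  assumes "subring S" "is_local S"
  shows "prime_ideal_of S (nonunits S)"
  unfolding prime_ideal_of_def
proof (intro conjI ballI impI)
  show "ideal_of S (nonunits S)" using assms(2) is_local_def by blast
  show "nonunits S \<noteq> S" using subring_one[OF assms(1)] mem_nonunits_iff[of 1 S] by auto
  fix a b assume ab: "a \<in> S" "b \<in> S" "a * b \<in> nonunits S"
  show "a \<in> nonunits S \<or> b \<in> nonunits S"
  proof (rule ccontr)
    assume "\<not> ?thesis"
    then have "a \<noteq> 0" "b \<noteq> 0" "inverse a \<in> S" "inverse b \<in> S"
      using ab(1,2) by (auto simp: mem_nonunits_iff)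
    then have "inverse (a * b) \<in> S" by (simp add: inverse_mult_distrib subring_mult[OF assms(1)])
    then show False using ab(3) \<open>a \<noteq> 0\<close> \<open>b \<noteq> 0\<close> by (simp add: mem_nonunits_iff)
  qed
qed

lemma prime_ideal_contraction:
  assumes "prime_ideal_of V Q" "subring R" "R \<subseteq> V"
  shows "prime_ideal_of R (Q \<inter> R)"
proof -
  note Q = ideal_ofD[OF prime_ideal_ofD(1)[OF assms(1)]]
  show ?thesis
    unfolding prime_ideal_of_def ideal_of_def
  proof (intro conjI ballI impI)
    show "0 \<in> Q \<inter> R" using Q(2) subring_zero[OF assms(2)] by blast
    show "Q \<inter> R \<noteq> R" using prime_ideal_one_notin[OF assms(1)] subring_one[OF assms(2)] by blast
    fix x y assume "x \<in> Q \<inter> R" "y \<in> Q \<inter> R"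
    then show "x + y \<in> Q \<inter> R" using Q(3) subring_add[OF assms(2)] by blast
  next
    fix s x assume "s \<in> R" "x \<in> Q \<inter> R"
    then show "s * x \<in> Q \<inter> R" using Q(4) subring_mult[OF assms(2)] assms(3) by blast
  next
    fix a b assume "a \<in> R" "b \<in> R" "a * b \<in> Q \<inter> R"
    then show "a \<in> Q \<inter> R \<or> b \<in> Q \<inter> R" using prime_ideal_ofD(3)[OF assms(1)] assms(3) by blast
  qed simp
qed

lemma nonunits_power:
  assumes "subring R" "is_local R" "t \<in> nonunits R" "0 < k"
  shows "t ^ k \<in> nonunits R"
proof -
  have "t ^ k = t ^ (k - 1) * t" using assms(4) by (simp add: power_eq_if)
  moreover have "t ^ (k - 1) \<in> R" using subring_power assms(1,3) nonunits_subset by blast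
  ultimately show ?thesis using ideal_ofD(4) assms(2,3) unfolding is_local_def by metis
qed

lemma one_minus_nonunit_notin_nonunits:
  assumes "subring R" "is_local R" "t \<in> nonunits R"
  shows "1 - t \<notin> nonunits R"
proof
  assume "1 - t \<in> nonunits R"
  then have "(1 - t) + t \<in> nonunits R" using ideal_ofD(3) assms(2,3) unfolding is_local_def by blast
  then show False using subring_one[OF assms(1)] by (simp add: mem_nonunits_iff)
qed

lemma mem_localizationI: "a \<in> R \<Longrightarrow> s \<in> R \<Longrightarrow> s \<notin> P \<Longrightarrow> a / s \<in> localization R P"
  unfolding localization_def by blast

lemma mem_localizationE:
  assumes "z \<in> localization R P"
  obtains a s where "a \<in> R" "s \<in> R" "s \<notin> P" "z = a / s"
  using assms unfolding localization_def by blast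

lemma localization_subset:
  assumes "subring V" "R \<subseteq> V"
  shows "localization R (nonunits V \<inter> R) \<subseteq> V"
proof
  fix z assume "z \<in> localization R (nonunits V \<inter> R)"
  then obtain a s where as: "a \<in> R" "s \<in> R" "s \<notin> nonunits V \<inter> R" "z = a / s"
    by (rule mem_localizationE)
  then have "inverse s \<in> V" using assms(2) by (auto simp: mem_nonunits_iff)
  then show "z \<in> V" using as assms by (auto simp: divide_inverse intro: subring_mult)
qed

lemma divide_notin_localization:
  assumes "prime_ideal_of R P" "x \<in> P" "x \<noteq> 0" "s \<in> R" "s \<notin> P"
  shows "s / x \<notin> localization R P"
proof
  assume "s / x \<in> localization R P"
  then obtain a \<sigma> where a\<sigma>: "a \<in> R" "\<sigma> \<in> R" "\<sigma> \<notin> P" "s / x = a / \<sigma>"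
    by (rule mem_localizationE)
  have "\<sigma> \<noteq> 0" using a\<sigma>(3) prime_ideal_zero_mem[OF assms(1)] by blast
  then have "s * \<sigma> = a * x" using a\<sigma>(4) assms(3) by (simp add: field_simps)
  moreover have "a * x \<in> P" using ideal_ofD(4)[OF prime_ideal_ofD(1)[OF assms(1)] a\<sigma>(1) assms(2)] .
  ultimately show False using prime_ideal_mult_notin[OF assms(1,4) a\<sigma>(2) assms(5) a\<sigma>(3)] by simp
qed

lemma prime_ideal_divide_mem:
  assumes "prime_ideal_of R P" "x \<in> P" "s \<in> R" "s \<notin> P" "x / s \<in> R"
  shows "x / s \<in> P"
proof -
  have "s * (x / s) = x" using assms(4) prime_ideal_zero_mem[OF assms(1)] by auto
  then show ?thesis using prime_ideal_ofD(3)[OF assms(1,3,5)] assms(2,4) by auto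
qed

lemma prime_ideal_of_intermediate:
  assumes "subring R" "R \<subseteq> V" "V \<subseteq> localization R P" "prime_ideal_of R P"
    and divide_mem: "\<And>x s. x \<in> P \<Longrightarrow> s \<in> R \<Longrightarrow> s \<notin> P \<Longrightarrow> x / s \<in> P"
  shows "prime_ideal_of V P"
proof -
  note P = ideal_ofD[OF prime_ideal_ofD(1)[OF assms(4)]]
  show ?thesis
    unfolding prime_ideal_of_def ideal_of_def
  proof (intro conjI ballI impI)
    show "P \<subseteq> V" using P(1) assms(2) by blast
    show "0 \<in> P" by (rule P(2))
    show "P \<noteq> V" using prime_ideal_one_notin[OF assms(4)] subring_one[OF assms(1)] assms(2) by blast
  next
    fix x y assume "x \<in> P" "y \<in> P"
    then show "x + y \<in> P" by (rule P(3))
  next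
    fix v x assume "v \<in> V" "x \<in> P"
    then obtain a s where as: "a \<in> R" "s \<in> R" "s \<notin> P" "v = a / s"
      using assms(3) by (blast elim: mem_localizationE)
    then have "v * x = (a * x) / s" by simp
    then show "v * x \<in> P" using divide_mem[OF P(4)[OF as(1) \<open>x \<in> P\<close>] as(2,3)] by simp
  next
    fix b c assume "b \<in> V" "c \<in> V" "b * c \<in> P"
    obtain b' s where b: "b' \<in> R" "s \<in> R" "s \<notin> P" "b = b' / s"
      using \<open>b \<in> V\<close> assms(3) by (blast elim: mem_localizationE)
    obtain c' s' where c: "c' \<in> R" "s' \<in> R" "s' \<notin> P" "c = c' / s'"
      using \<open>c \<in> V\<close> assms(3) by (blast elim: mem_localizationE)
    have "s \<noteq> 0" "s' \<noteq> 0" using b(3) c(3) P(2) by auto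
    then have "b' = s * b" "c' = s' * c" using b(4) c(4) by simp_all
    then have "b' * c' = (s * s') * (b * c)" by (simp add: ac_simps)
    also have "\<dots> \<in> P" using P(4)[OF subring_mult[OF assms(1) b(2) c(2)] \<open>b * c \<in> P\<close>] .
    finally have "b' \<in> P \<or> c' \<in> P" using prime_ideal_ofD(3)[OF assms(4) b(1) c(1)] by blast
    then show "b \<in> P \<or> c \<in> P" using divide_mem b c by auto
  qed
qed

section \<open>Translates of geometric sequences modulo a submodule\<close>

definition submodule_of :: "'a::field set \<Rightarrow> 'a set \<Rightarrow> bool" where
  "submodule_of R S \<longleftrightarrow>
     0 \<in> S \<and> (\<forall>x\<in>S. \<forall>y\<in>S. x - y \<in> S) \<and> (\<forall>r\<in>R. \<forall>x\<in>S. r * x \<in> S)"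

lemma submodule_ofD:
  assumes "submodule_of R S"
  shows "0 \<in> S" "x \<in> S \<Longrightarrow> y \<in> S \<Longrightarrow> x - y \<in> S"
    and "r \<in> R \<Longrightarrow> x \<in> S \<Longrightarrow> r * x \<in> S"
  using assms unfolding submodule_of_def by auto

lemma submodule_of_subring: "subring S \<Longrightarrow> R \<subseteq> S \<Longrightarrow> submodule_of R S"
  unfolding submodule_of_def using subring_zero subring_diff subring_mult by blast

lemma submodule_of_principal:
  assumes "subring R"
  shows "submodule_of R ((*) x ` R)"
  unfolding submodule_of_def
proof (intro conjI ballI)
  show "0 \<in> (*) x ` R" using subring_zero[OF assms] by force
  fix a b assume "a \<in> (*) x ` R" "b \<in> (*) x ` R"
  then show "a - b \<in> (*) x ` R"
    using subring_diff[OF assms] by (auto simp: right_diff_distrib[symmetric])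
next
  fix r a assume "r \<in> R" "a \<in> (*) x ` R"
  then show "r * a \<in> (*) x ` R"
    using subring_mult[OF assms] by (auto simp: mult.left_commute)
qed

lemma submodule_power_cancel:
  assumes "submodule_of R S" "subring R" "is_local R" "t \<in> nonunits R"
    and "i < j" "f * t ^ i - f * t ^ j \<in> S"
  shows "f * t ^ i \<in> S"
proof -
  define e where "e = 1 - t ^ (j - i)"
  have "e \<notin> nonunits R"
    unfolding e_def using assms(2-5) by (simp add: one_minus_nonunit_notin_nonunits nonunits_power)
  moreover have "e \<in> R"
    unfolding e_def using assms(2,4) nonunits_subset
    by (blast intro: subring_diff subring_one subring_power)
  ultimately have e: "e \<noteq> 0" "inverse e \<in> R" by (auto simp: mem_nonunits_iff)
  have "f * t ^ i - f * t ^ j = e * (f * t ^ i)"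
    using assms(5) by (simp add: e_def algebra_simps power_add[symmetric])
  then have "f * t ^ i = inverse e * (f * t ^ i - f * t ^ j)" using e(1) by simp
  then show ?thesis using submodule_ofD(3)[OF assms(1) e(2) assms(6)] by simp
qed

lemma submodule_power_shift_iff:
  assumes "submodule_of R S" "subring R" "is_local R" "t \<in> nonunits R"
    and "\<forall>k<n. f * t ^ k \<notin> S" "g \<in> S" "i < n" "i' < n"
  shows "f * t ^ i + g - f * t ^ i' \<in> S \<longleftrightarrow> i' = i"
proof
  assume mem: "f * t ^ i + g - f * t ^ i' \<in> S"
  have diff: "f * t ^ i - f * t ^ i' \<in> S"
    using submodule_ofD(2)[OF assms(1) mem assms(6)] by (simp add: algebra_simps)
  have "f * t ^ i' - f * t ^ i \<in> S"
    using submodule_ofD(2)[OF assms(1) submodule_ofD(1)[OF assms(1)] diff] by simp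
  then show "i' = i"
    using diff submodule_power_cancel[OF assms(1-4)] assms(5,7,8) by (metis linorder_neqE_nat)
qed (use assms(6) in simp)

section \<open>Two ict-patterns\<close>

lemma not_dp_minimalI:
  fixes a b c :: "nat \<Rightarrow> nat \<Rightarrow> nat \<Rightarrow> 'a::comm_ring_1"
  assumes "\<And>n i k. i < n \<Longrightarrow> a n i k \<in> D" "\<And>n j k. j < n \<Longrightarrow> b n j k \<in> D"
    and "\<And>n i j. i < n \<Longrightarrow> j < n \<Longrightarrow> c n i j \<in> D"
    and "\<And>n i j i'. i < n \<Longrightarrow> j < n \<Longrightarrow> i' < n \<Longrightarrow>
      sat D P ((a n i')(0 := c n i j)) \<phi> \<longleftrightarrow> i' = i"
    and "\<And>n i j j'. i < n \<Longrightarrow> j < n \<Longrightarrow> j' < n \<Longrightarrow>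
      sat D P ((b n j')(0 := c n i j)) \<psi> \<longleftrightarrow> j' = j"
  shows "\<not> dp_minimal D P"
  unfolding dp_minimal_def not_not
proof (rule exI[of _ \<phi>], rule exI[of _ \<psi>], rule allI)
  fix n :: nat
  show "\<exists>a b. (\<forall>i<n. \<forall>k. a i k \<in> D) \<and> (\<forall>j<n. \<forall>k. b j k \<in> D) \<and>
      (\<forall>i<n. \<forall>j<n. \<exists>c\<in>D. (\<forall>i'<n. sat D P ((a i')(0 := c)) \<phi> \<longleftrightarrow> i' = i) \<and>
                             (\<forall>j'<n. sat D P ((b j')(0 := c)) \<psi> \<longleftrightarrow> j' = j))"
  proof (rule exI[of _ "a n"], rule exI[of _ "b n"], intro conjI allI impI)
    fix i j assume "i < n" "j < n"
    then show "\<exists>c\<in>D. (\<forall>i'<n. sat D P ((a n i')(0 := c)) \<phi> \<longleftrightarrow> i' = i) \<and>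
                             (\<forall>j'<n. sat D P ((b n j')(0 := c)) \<psi> \<longleftrightarrow> j' = j)"
      using assms(3-5) by (intro bexI[of _ "c n i j"]) auto
  qed (use assms(1,2) in auto)
qed

text \<open>The formula is x0 - x1 \<in> x2 R, with parameters (y t^i, x) and (x t^j, y);
  y t^i + x t^j realizes row i and column j.\<close>
lemma dp_minimal_local_power_dichotomy:
  assumes "subring R" "is_local R" "dp_minimal R (\<lambda>_. {})"
    and "x \<in> R" "y \<in> R" "t \<in> nonunits R"
  shows "(\<exists>k. y * t ^ k \<in> (*) x ` R) \<or> (\<exists>k. x * t ^ k \<in> (*) y ` R)"
proof (rule ccontr)
  assume "\<not> ?thesis"
  then have avoid_x: "\<forall>k<n. y * t ^ k \<notin> (*) x ` R"
    and avoid_y: "\<forall>k<n. x * t ^ k \<notin> (*) y ` R" for n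
    by auto
  have tR: "t ^ k \<in> R" for k using assms(1,6) nonunits_subset subring_power by blast
  have xtR: "x * t ^ k \<in> R" and ytR: "y * t ^ k \<in> R" for k
    using subring_mult[OF assms(1)] assms(4,5) tR by blast+
  define \<phi> where "\<phi> = Ex 3 (Eq (Add (Var 0) (Minus (Var 1))) (Mul (Var 2) (Var 3)))"
  have sat_\<phi>: "sat R P (v(0 := c)) \<phi> \<longleftrightarrow> c - v 1 \<in> (*) (v 2) ` R" for P v c
    by (auto simp: \<phi>_def image_iff)
  have "\<not> dp_minimal R (\<lambda>_. {})"
  proof (rule not_dp_minimalI[where \<phi> = \<phi> and \<psi> = \<phi>
        and a = "\<lambda>n i k. if k = 1 then y * t ^ i else x"
        and b = "\<lambda>n j k. if k = 1 then x * t ^ j else y"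
        and c = "\<lambda>n i j. y * t ^ i + x * t ^ j"])
    show "(if k = 1 then y * t ^ i else x) \<in> R" for i k using ytR assms(4) by simp
    show "(if k = 1 then x * t ^ j else y) \<in> R" for j k using xtR assms(5) by simp
    show "y * t ^ i + x * t ^ j \<in> R" for i j using subring_add[OF assms(1) ytR xtR] .
  next
    fix n i j i' :: nat assume i: "i < n" and "j < n" and i': "i' < n"
    have "x * t ^ j \<in> (*) x ` R" using tR by blast
    then have "y * t ^ i + x * t ^ j - y * t ^ i' \<in> (*) x ` R \<longleftrightarrow> i' = i"
      by (rule submodule_power_shift_iff[OF submodule_of_principal[OF assms(1)] assms(1,2,6) avoid_x _ i i'])
    then show "sat R (\<lambda>_. {}) ((\<lambda>k. if k = 1 then y * t ^ i' else x)(0 := y * t ^ i + x * t ^ j)) \<phi>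
        \<longleftrightarrow> i' = i"
      by (simp only: sat_\<phi>) simp
  next
    fix n i j j' :: nat assume "i < n" and j: "j < n" and j': "j' < n"
    have "y * t ^ i \<in> (*) y ` R" using tR by blast
    then have "x * t ^ j + y * t ^ i - x * t ^ j' \<in> (*) y ` R \<longleftrightarrow> j' = j"
      by (rule submodule_power_shift_iff[OF submodule_of_principal[OF assms(1)] assms(1,2,6) avoid_y _ j j'])
    then show "sat R (\<lambda>_. {}) ((\<lambda>k. if k = 1 then x * t ^ j' else y)(0 := y * t ^ i + x * t ^ j)) \<phi>
        \<longleftrightarrow> j' = j"
      by (simp only: sat_\<phi>) (simp add: add.commute)
  qed
  then show False using assms(3) by contradiction
qed

text \<open>The formulas are x0 - x1 \<in> R and (x0 - x1) x2 \<in> V, with parameters y t^i and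
  (t^j, 1/y); y t^i + t^j realizes row i and column j.\<close>
lemma dp_minimal_pair_power_bound:
  assumes "subring R" "is_local R" "subring V" "R \<subseteq> V" "t \<in> nonunits R"
    and "dp_minimal UNIV (\<lambda>k. if k = 0 then R else if k = 1 then V else {})"
  shows "\<exists>n. \<forall>y. y \<noteq> 0 \<longrightarrow> (\<exists>k<n. y * t ^ k \<in> R) \<or> (\<exists>k<n. inverse y * t ^ k \<in> V)"
proof (rule ccontr)
  assume "\<not> ?thesis"
  then obtain Y where Y: "Y n \<noteq> 0" and avoid_R: "\<forall>k<n. Y n * t ^ k \<notin> R"
    and avoid_V: "\<forall>k<n. inverse (Y n) * t ^ k \<notin> V" for n
    by metis
  have tR: "t ^ k \<in> R" for k using assms(1,5) nonunits_subset subring_power by blast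
  define P where "P = (\<lambda>k::nat. if k = 0 then R else if k = 1 then V else {})"
  define \<phi> where "\<phi> = Pred 0 (Add (Var 0) (Minus (Var 1)))"
  define \<psi> where "\<psi> = Pred 1 (Mul (Add (Var 0) (Minus (Var 1))) (Var 2))"
  have "\<not> dp_minimal UNIV P"
  proof (rule not_dp_minimalI[where \<phi> = \<phi> and \<psi> = \<psi>
        and a = "\<lambda>n i k. Y n * t ^ i"
        and b = "\<lambda>n j k. if k = 1 then t ^ j else inverse (Y n)"
        and c = "\<lambda>n i j. Y n * t ^ i + t ^ j"])
    fix n i j i' :: nat assume i: "i < n" and "j < n" and i': "i' < n"
    have "Y n * t ^ i + t ^ j - Y n * t ^ i' \<in> R \<longleftrightarrow> i' = i"
      by (rule submodule_power_shift_iff[OF submodule_of_subring[OF assms(1) order_refl]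
            assms(1,2,5) avoid_R tR i i'])
    then show "sat UNIV P ((\<lambda>k. Y n * t ^ i')(0 := Y n * t ^ i + t ^ j)) \<phi> \<longleftrightarrow> i' = i"
      by (simp add: \<phi>_def P_def)
  next
    fix n i j j' :: nat assume "i < n" and j: "j < n" and j': "j' < n"
    have "t ^ i \<in> V" using tR assms(4) by blast
    then have "inverse (Y n) * t ^ j + t ^ i - inverse (Y n) * t ^ j' \<in> V \<longleftrightarrow> j' = j"
      by (rule submodule_power_shift_iff[OF submodule_of_subring[OF assms(3,4)]
            assms(1,2,5) avoid_V _ j j'])
    moreover have "(Y n * t ^ i + t ^ j - t ^ j') * inverse (Y n)
        = inverse (Y n) * t ^ j + t ^ i - inverse (Y n) * t ^ j'"
      using Y by (simp add: algebra_simps)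
    ultimately show "sat UNIV P ((\<lambda>k. if k = 1 then t ^ j' else inverse (Y n))(0 := Y n * t ^ i + t ^ j)) \<psi>
        \<longleftrightarrow> j' = j"
      by (simp add: \<psi>_def P_def)
  qed simp_all
  then show False using assms(6) P_def by blast
qed

section \<open>Non-dominant local overrings\<close>

lemma fraction_field_power_dichotomy:
  assumes "subring R" "is_local R" "dp_minimal R (\<lambda>_. {})" "fraction_field_is R"
    and "t \<in> nonunits R"
  obtains k w where "w \<in> R" "z * t ^ k = w \<or> z * w = t ^ k"
proof -
  obtain x y where xy: "x \<in> R" "y \<in> R" "y \<noteq> 0" "z = x / y"
    using assms(4) unfolding fraction_field_is_def by blast
  from dp_minimal_local_power_dichotomy[OF assms(1-3) xy(1,2) assms(5)]
  obtain k w where "w \<in> R" "y * t ^ k = x * w \<or> x * t ^ k = y * w"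
    by (auto simp: image_iff)
  then show ?thesis
    using that[of w k] xy(3,4) by (auto simp: field_simps)
qed

lemma valuation_ring_if_inverse_nonunit:
  assumes "subring R" "is_local R" "dp_minimal R (\<lambda>_. {})" "fraction_field_is R"
    and "subring V" "R \<subseteq> V" "a \<in> nonunits R" "a \<noteq> 0" "inverse a \<in> V"
  shows "valuation_ring V"
  unfolding valuation_ring_def
proof (intro conjI allI impI assms(5))
  fix z :: 'a assume "z \<noteq> 0"
  obtain k w where w: "w \<in> R" "z * a ^ k = w \<or> z * w = a ^ k"
    using fraction_field_power_dichotomy[OF assms(1-4,7)] .
  have "w * inverse a ^ k \<in> V"
    using w(1) assms(5,6,9) by (blast intro: subring_mult subring_power)
  moreover have "z = w * inverse a ^ k \<or> inverse z = w * inverse a ^ k"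
    using w(2) \<open>z \<noteq> 0\<close> assms(8) by (auto simp: field_simps)
  ultimately show "z \<in> V \<or> inverse z \<in> V" by auto
qed

lemma eq_localization_if_inverse_nonunit:
  assumes "subring R" "is_local R" "dp_minimal R (\<lambda>_. {})" "fraction_field_is R"
    and "subring V" "R \<subseteq> V" "a \<in> nonunits R" "a \<noteq> 0" "inverse a \<in> V"
  shows "V = localization R (nonunits V \<inter> R)"
proof
  show "localization R (nonunits V \<inter> R) \<subseteq> V" using localization_subset assms(5,6) .
  show "V \<subseteq> localization R (nonunits V \<inter> R)"
  proof
    fix v assume "v \<in> V"
    have aR: "a ^ k \<in> R" for k using assms(1,7) nonunits_subset subring_power by blast
    have a_unit: "a ^ k \<notin> nonunits V" for k
      using subring_power[OF assms(5,9), of k] assms(8) by (simp add: mem_nonunits_iff power_inverse)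
    obtain k w where w: "w \<in> R" "v * a ^ k = w \<or> v * w = a ^ k"
      using fraction_field_power_dichotomy[OF assms(1-4,7)] .
    then consider "v = w / a ^ k" | "v * w = a ^ k" using assms(8) by (auto simp: field_simps)
    then show "v \<in> localization R (nonunits V \<inter> R)"
    proof cases
      case 1
      then show ?thesis using w(1) aR a_unit by (simp add: mem_localizationI)
    next
      case 2
      have "w \<noteq> 0" using 2 assms(8) by auto
      have "inverse w = v * inverse a ^ k"
        using 2 \<open>w \<noteq> 0\<close> assms(8) by (simp add: field_simps power_inverse[symmetric])
      then have "w \<notin> nonunits V"
        using \<open>v \<in> V\<close> \<open>w \<noteq> 0\<close> assms(5,9) by (simp add: mem_nonunits_iff subring_mult subring_power)
      moreover have "v = a ^ k / w" using 2 \<open>w \<noteq> 0\<close> by (metis nonzero_mult_div_cancel_right)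
      ultimately show ?thesis using w(1) aR by (simp add: mem_localizationI)
    qed
  qed
qed

lemma nondominant_local_overring:
  assumes "subring R" "is_local R" "dp_minimal R (\<lambda>_. {})" "fraction_field_is R"
    and "subring V" "R \<subseteq> V" "is_local V" "\<not> nonunits R \<subseteq> nonunits V"
  shows "valuation_ring V \<and> (\<exists>P. prime_ideal_of R P \<and> P \<noteq> nonunits R \<and> V = localization R P)"
proof -
  obtain a where a: "a \<in> nonunits R" "a \<notin> nonunits V" using assms(8) by blast
  then have "a \<noteq> 0" "inverse a \<in> V" using assms(6) nonunits_subset by (auto simp: mem_nonunits_iff)
  moreover have "prime_ideal_of R (nonunits V \<inter> R)"
    using prime_ideal_contraction[OF prime_ideal_nonunits[OF assms(5,7)] assms(1,6)] .
  moreover have "nonunits V \<inter> R \<noteq> nonunits R" using a by blast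
  ultimately show ?thesis
    using valuation_ring_if_inverse_nonunit[OF assms(1-6) a(1)]
      eq_localization_if_inverse_nonunit[OF assms(1-6) a(1)] by blast
qed

section \<open>Dominant overrings\<close>

lemma dominant_overring_subset_localization:
  assumes "subring R" "is_local R" "subring V" "R \<subseteq> V" "nonunits R \<subseteq> nonunits V"
    and "dp_minimal UNIV (\<lambda>k. if k = 0 then R else if k = 1 then V else {})"
    and "prime_ideal_of R P" "t \<in> nonunits R" "t \<notin> P"
  shows "V \<subseteq> localization R P"
proof
  fix v assume "v \<in> V"
  show "v \<in> localization R P"
  proof (rule ccontr)
    assume v_notin: "v \<notin> localization R P"
    have tR: "t ^ k \<in> R" for k using assms(1,8) nonunits_subset subring_power by blast
    have t_notin: "t ^ k \<notin> P" for k
      using prime_ideal_power_notin assms(1,7-9) nonunits_subset by blast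
    have "0 \<in> localization R P"
      using mem_localizationI[of 0 R 1 P] subring_zero[OF assms(1)] subring_one[OF assms(1)]
        prime_ideal_one_notin[OF assms(7)] by simp
    then have "v \<noteq> 0" using v_notin by blast
    have "t \<noteq> 0" using assms(9) prime_ideal_zero_mem[OF assms(7)] by blast
    obtain n where n: "\<forall>y. y \<noteq> 0 \<longrightarrow> (\<exists>k<n. y * t ^ k \<in> R) \<or> (\<exists>k<n. inverse y * t ^ k \<in> V)"
      using dp_minimal_pair_power_bound[OF assms(1-4,8,6)] by blast
    moreover have "v * t ^ n \<noteq> 0" using \<open>v \<noteq> 0\<close> \<open>t \<noteq> 0\<close> by simp
    ultimately consider k where "k < n" "v * t ^ n * t ^ k \<in> R"
      | k where "k < n" "inverse (v * t ^ n) * t ^ k \<in> V"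
      by blast
    then show False
    proof cases
      case (1 k)
      have "v * t ^ n * t ^ k / t ^ (n + k) \<in> localization R P"
        by (rule mem_localizationI[OF 1(2) tR t_notin])
      moreover have "v * t ^ n * t ^ k / t ^ (n + k) = v" using \<open>t \<noteq> 0\<close> by (simp add: power_add)
      ultimately show False using v_notin by simp
    next
      case (2 k)
      have "inverse t = v * t ^ (n - k - 1) * (inverse (v * t ^ n) * t ^ k)"
        using \<open>v \<noteq> 0\<close> \<open>t \<noteq> 0\<close> 2(1)
        by (simp add: field_simps power_add[symmetric] power_Suc[symmetric])
      also have "\<dots> \<in> V"
        using 2(2) \<open>v \<in> V\<close> tR assms(3,4) by (blast intro: subring_mult)
      finally show False
        using assms(5,8) \<open>t \<noteq> 0\<close> by (auto simp: mem_nonunits_iff)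
    qed
  qed
qed

lemma dominant_overring_divide_mem:
  assumes "subring R" "is_local R" "subring V" "R \<subseteq> V" "nonunits R \<subseteq> nonunits V"
    and "dp_minimal UNIV (\<lambda>k. if k = 0 then R else if k = 1 then V else {})"
    and "prime_ideal_of R P" "t \<in> nonunits R" "t \<notin> P"
    and "x \<in> P" "s \<in> R" "s \<notin> P"
  shows "x / s \<in> R"
proof (rule ccontr)
  assume z_notin: "x / s \<notin> R"
  have tR: "t ^ k \<in> R" for k using assms(1,8) nonunits_subset subring_power by blast
  have t_notin: "t ^ k \<notin> P" for k
    using prime_ideal_power_notin assms(1,7-9) nonunits_subset by blast
  have "t \<noteq> 0" "s \<noteq> 0" using assms(9,12) prime_ideal_zero_mem[OF assms(7)] by auto
  have "x \<noteq> 0" using z_notin subring_zero[OF assms(1)] by auto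
  obtain n where n: "\<forall>y. y \<noteq> 0 \<longrightarrow> (\<exists>k<n. y * t ^ k \<in> R) \<or> (\<exists>k<n. inverse y * t ^ k \<in> V)"
    using dp_minimal_pair_power_bound[OF assms(1-4,8,6)] by blast
  moreover have "x / s / t ^ n \<noteq> 0" using \<open>x \<noteq> 0\<close> \<open>s \<noteq> 0\<close> \<open>t \<noteq> 0\<close> by simp
  ultimately consider k where "k < n" "x / s / t ^ n * t ^ k \<in> R"
    | k where "k < n" "inverse (x / s / t ^ n) * t ^ k \<in> V"
    by blast
  then show False
  proof cases
    case (1 k)
    have "t ^ k * t ^ (n - k) = t ^ n" using 1(1) by (simp flip: power_add)
    then have "x / s = x / s / t ^ n * t ^ k * t ^ (n - k)" using \<open>t \<noteq> 0\<close> by (simp add: mult.assoc)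
    moreover have "x / s / t ^ n * t ^ k * t ^ (n - k) \<in> R" by (rule subring_mult[OF assms(1) 1(2) tR])
    ultimately show False using z_notin by metis
  next
    case (2 k)
    have "inverse (x / s / t ^ n) * t ^ k = t ^ (n + k) * s / x"
      by (simp add: field_simps power_add)
    then have "t ^ (n + k) * s / x \<in> localization R P"
      using 2(2) dominant_overring_subset_localization[OF assms(1-9)] by (metis subsetD)
    then show False
      using divide_notin_localization[OF assms(7,10) \<open>x \<noteq> 0\<close>] subring_mult[OF assms(1) tR assms(11)]
        prime_ideal_mult_notin[OF assms(7) tR assms(11) t_notin assms(12)]
      by blast
  qed
qed

lemma dominant_overring_prime_ideal:
  assumes "subring R" "is_local R" "subring V" "R \<subseteq> V" "nonunits R \<subseteq> nonunits V"
    and "dp_minimal UNIV (\<lambda>k. if k = 0 then R else if k = 1 then V else {})"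
    and "prime_ideal_of R P" "P \<noteq> nonunits R"
  shows "V \<subseteq> localization R P \<and> prime_ideal_of V P"
proof -
  obtain t where t: "t \<in> nonunits R" "t \<notin> P"
    using prime_ideal_subset_nonunits[OF assms(7,1)] assms(8) by blast
  have "V \<subseteq> localization R P"
    using dominant_overring_subset_localization[OF assms(1-7) t] .
  moreover have "prime_ideal_of V P"
    using prime_ideal_of_intermediate[OF assms(1,4) calculation assms(7)]
      prime_ideal_divide_mem[OF assms(7)] dominant_overring_divide_mem[OF assms(1-7) t] by blast
  ultimately show ?thesis ..
qed

theorem mainTheorem18:
  fixes R M :: "'K::field set"
  assumes "subring R"
    and "fraction_field_is R"
    and "dp_minimal R (\<lambda>_. {})"
    and "is_local R"
    and "M = nonunits R"
  shows "(\<forall>V m. subring V \<and> R \<subseteq> V \<and> is_local V \<and> m = nonunits V \<and> \<not> M \<subseteq> m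
            \<longrightarrow> valuation_ring V \<and> (\<exists>p. prime_ideal_of R p \<and> p \<noteq> M \<and> V = localization R p))
       \<and> (\<forall>V m. valuation_ring V \<and> R \<subseteq> V \<and> m = nonunits V \<and> M \<subseteq> m
            \<and> dp_minimal UNIV (\<lambda>k. if k = 0 then R else if k = 1 then V else {})
            \<longrightarrow> (\<forall>p. prime_ideal_of R p \<and> p \<noteq> M \<longrightarrow> V \<subseteq> localization R p)
              \<and> (\<forall>p. prime_ideal_of R p \<and> p \<noteq> M \<longrightarrow> prime_ideal_of V p)
              \<and> (\<forall>q. prime_ideal_of V q \<and> q \<subset> M \<longrightarrow> prime_ideal_of R q))"
proof -
  have nondominant: "valuation_ring V \<and> (\<exists>p. prime_ideal_of R p \<and> p \<noteq> M \<and> V = localization R p)"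
    if "subring V" "R \<subseteq> V" "is_local V" "\<not> M \<subseteq> nonunits V" for V
    using nondominant_local_overring[OF assms(1,4,3,2) that(1-3)] that(4) assms(5) by blast
  have dominant: "V \<subseteq> localization R p \<and> prime_ideal_of V p"
    if "valuation_ring V" "R \<subseteq> V" "M \<subseteq> nonunits V"
      "dp_minimal UNIV (\<lambda>k. if k = 0 then R else if k = 1 then V else {})"
      "prime_ideal_of R p" "p \<noteq> M" for V p
    using dominant_overring_prime_ideal[OF assms(1,4) _ that(2) _ that(4-5)] that(1,3,6) assms(5)
    unfolding valuation_ring_def by blast
  have contraction: "prime_ideal_of R q" if "R \<subseteq> V" "prime_ideal_of V q" "q \<subset> M" for V q
  proof -
    have "q \<inter> R = q" using that(3) assms(5) nonunits_subset by blast
    then show ?thesis using prime_ideal_contraction[OF that(2) assms(1) that(1)] by simp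
  qed
  show ?thesis by (intro conjI allI impI; elim conjE; simp add: nondominant dominant contraction)
qed

end
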